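(* Assume $[p,p']\cap\overline D=\emptyset$ (convexity of $D$ is not assumed). There exist positive constants $C,\mu,\tau_0$ such that for all $\tau\ge\tau_0$, $$\tau^{2+\mu}e^{\tau\min_{x\in\partial D}\phi(x;p,p')}e^{-\tau(\eta+\eta')}J(\tau;f,g)\ge C.$$
   Context: Let $D\subset\mathbb R^3$ be a nonempty bounded open set with $C^2$ boundary. $B,B'$ are open balls with centers $p,p'$ and radii $\eta,\eta'$, with $\overline B\cap\overline D=\overline{B'}\cap\overline D=\emptyset$; $f=\chi_B$, $g=\chi_{B'}$. $[p,p']$ is the closed segment between $p$ and $p'$. For $h\in L^2$ and $\tau>0$, $v_h(x)=\frac1{4\pi}\int\frac{e^{-\tau|x-y|}}{|x-y|}h(y)dy$. $J(\tau;f,g)=\int_D(\nabla v_f\cdot\nabla v_g+\tau^2v_fv_g)dx$. $\phi(x;y,y')=|y-x|+|x-y'|$. *)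

theory Defs
  imports "HOL-Analysis.Analysis"
begin

definition C2_on :: "(real^3 \<Rightarrow> real) \<Rightarrow> (real^3) set \<Rightarrow> bool" where
  "C2_on \<rho> U \<longleftrightarrow>
     (\<exists>D1 :: real^3 \<Rightarrow> ((real^3) \<Rightarrow>\<^sub>L real).
      \<exists>D2 :: real^3 \<Rightarrow> ((real^3) \<Rightarrow>\<^sub>L ((real^3) \<Rightarrow>\<^sub>L real)).
        (\<forall>x\<in>U. (\<rho> has_derivative blinfun_apply (D1 x)) (at x)) \<and>
        (\<forall>x\<in>U. (D1 has_derivative blinfun_apply (D2 x)) (at x)) \<and>
        continuous_on U D2)"

definition C2_boundary :: "(real^3) set \<Rightarrow> bool" where
  "C2_boundary D \<longleftrightarrow>
     (\<forall>z\<in>frontier D. \<exists>U \<rho>. open U \<and> z \<in> U \<and> C2_on \<rho> U \<and>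
        (\<forall>x\<in>U. frechet_derivative \<rho> (at x) \<noteq> (\<lambda>h. 0)) \<and>
        D \<inter> U = {x\<in>U. \<rho> x < 0})"

definition vpot :: "real \<Rightarrow> (real^3 \<Rightarrow> real) \<Rightarrow> real^3 \<Rightarrow> real" where
  "vpot \<tau> h x = 1 / (4 * pi) *
     integral UNIV (\<lambda>y. exp (- \<tau> * dist x y) / dist x y * h y)"

definition grad_dot :: "(real^3 \<Rightarrow> real) \<Rightarrow> (real^3 \<Rightarrow> real) \<Rightarrow> real^3 \<Rightarrow> real" where
  "grad_dot u w x = (\<Sum>i\<in>UNIV. frechet_derivative u (at x) (axis i 1) *
                                 frechet_derivative w (at x) (axis i 1))"

definition Jfun :: "(real^3) set \<Rightarrow> real \<Rightarrow> (real^3 \<Rightarrow> real) \<Rightarrow> (real^3 \<Rightarrow> real) \<Rightarrow> real" where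
  "Jfun D \<tau> f g = integral D (\<lambda>x. grad_dot (vpot \<tau> f) (vpot \<tau> g) x
                                    + \<tau>\<^sup>2 * vpot \<tau> f x * vpot \<tau> g x)"

definition phi :: "real^3 \<Rightarrow> real^3 \<Rightarrow> real^3 \<Rightarrow> real" where
  "phi x y y' = dist y x + dist x y'"

end

theory Submission
  imports Defs
begin

text \<open>The potentials of the two balls are Yukawa potentials \<open>U, U'\<close>, radial about
  \<open>p\<close> and \<open>p'\<close>, and each gradient is a nonpositive multiple of the outward radial direction
  of size at most \<open>(\<tau> + 1/d) U\<close>, d the distance to the ball. On the closure of D, which keeps
  away from the balls and from the segment \<open>[p,p']\<close>, the angle between the two radial
  directions stays uniformly below \<open>\<pi>\<close>; for large \<open>\<tau>\<close> the integrand of J is then at least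
  a constant times \<open>\<tau>\<^sup>2 U U'\<close>, and \<open>U U' \<ge> c \<tau>\<^sup>-\<^sup>6 exp(-\<tau> (|x-p| + |x-p'| - \<eta> - \<eta>'))\<close>.
  The \<open>C\<^sup>2\<close> boundary provides, at a boundary point minimising \<open>\<phi>\<close>, balls inside D of
  radius comparable to \<open>1/\<tau>\<close> at distance \<open>O(1/\<tau>)\<close>; integrating over one of them gives
  \<open>J \<ge> C \<tau>\<^sup>-\<^sup>7 exp(-\<tau> (min \<phi> - \<eta> - \<eta>'))\<close>.\<close>

definition yukawa_kernel :: "real \<Rightarrow> real^3 \<Rightarrow> real" where
  "yukawa_kernel \<tau> z = exp (- \<tau> * norm z) / norm z"

definition yukawa_kernel_grad :: "real \<Rightarrow> real^3 \<Rightarrow> real^3" where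
  "yukawa_kernel_grad \<tau> z = (- (\<tau> * norm z + 1) * exp (- \<tau> * norm z) / (norm z)^3) *\<^sub>R z"

lemma has_derivative_yukawa_kernel:
  assumes "z \<noteq> 0"
  shows "(yukawa_kernel \<tau> has_derivative (\<lambda>h. yukawa_kernel_grad \<tau> z \<bullet> h)) (at z)"
proof -
  have n: "norm z > 0" using assms by simp
  define k where "k r = exp (- \<tau> * r) / r" for r :: real
  define d where "d = (exp (- \<tau> * norm z) * (- \<tau>) * norm z - exp (- \<tau> * norm z)) / (norm z)^2"
  have dk: "(k has_real_derivative d) (at (norm z))"
    unfolding k_def d_def
    by (rule derivative_eq_intros refl | use n in \<open>simp add: power2_eq_square\<close>)+
  have "((k \<circ> norm) has_derivative ((\<lambda>x. d * x) \<circ> (\<lambda>h. h \<bullet> sgn z))) (at z)"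
    by (rule diff_chain_at[OF has_derivative_norm[OF assms]])
       (use dk in \<open>simp add: has_field_derivative_def\<close>)
  moreover have "k \<circ> norm = yukawa_kernel \<tau>"
    by (auto simp: k_def yukawa_kernel_def fun_eq_iff)
  moreover have "(\<lambda>x. d * x) \<circ> (\<lambda>h. h \<bullet> sgn z) = (\<lambda>h. yukawa_kernel_grad \<tau> z \<bullet> h)"
    using n by (auto simp: yukawa_kernel_grad_def d_def sgn_div_norm field_simps
        power3_eq_cube power2_eq_square inner_commute)
  ultimately show ?thesis by simp
qed

lemma yukawa_kernel_nonneg: "yukawa_kernel \<tau> z \<ge> 0"
  by (simp add: yukawa_kernel_def)

lemma yukawa_kernel_ge:
  assumes "0 < norm z" "norm z \<le> r" "\<tau> \<ge> 0"
  shows "exp (- \<tau> * r) / r \<le> yukawa_kernel \<tau> z"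
  unfolding yukawa_kernel_def using assms by (intro frac_le) (auto intro: mult_left_mono)

lemma norm_yukawa_kernel_grad:
  assumes "z \<noteq> 0" "\<tau> \<ge> 0"
  shows "norm (yukawa_kernel_grad \<tau> z) = (\<tau> + 1 / norm z) * yukawa_kernel \<tau> z"
proof -
  have "0 \<le> \<tau> * norm z" using assms(2) by simp
  then have "\<bar>- (\<tau> * norm z + 1)\<bar> = \<tau> * norm z + 1" by simp
  then show ?thesis
    using assms by (simp add: yukawa_kernel_grad_def yukawa_kernel_def abs_mult
        divide_simps power3_eq_cube)
qed

lemma yukawa_kernel_grad_orthogonal_transformation:
  assumes "orthogonal_transformation T"
  shows "yukawa_kernel_grad \<tau> (T z) = T (yukawa_kernel_grad \<tau> z)"
  using assms by (simp add: yukawa_kernel_grad_def orthogonal_transformation_norm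
      orthogonal_transformation_scaleR)

lemma continuous_on_yukawa_kernel_diff:
  "x \<notin> S \<Longrightarrow> continuous_on S (\<lambda>y. yukawa_kernel \<tau> (x - y))"
  unfolding yukawa_kernel_def by (intro continuous_intros) auto

lemma continuous_on_yukawa_kernel_grad_diff:
  "x \<notin> S \<Longrightarrow> continuous_on S (\<lambda>y. yukawa_kernel_grad \<tau> (x - y))"
  unfolding yukawa_kernel_grad_def by (intro continuous_intros) auto

lemma absolutely_integrable_on_if_continuous_on_compact:
  fixes f :: "'a::euclidean_space \<Rightarrow> 'b::euclidean_space"
  assumes "continuous_on K f" "compact K" "S \<subseteq> K" "S \<in> lmeasurable"
  shows "f absolutely_integrable_on S"
proof -
  obtain M where M: "\<forall>x\<in>K. norm (f x) \<le> M"
    using compact_imp_bounded[OF compact_continuous_image[OF assms(1,2)]]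
    by (auto simp: bounded_iff)
  show ?thesis
    by (rule measurable_bounded_by_integrable_imp_absolutely_integrable[where g="\<lambda>_. M"])
       (use assms M continuous_on_subset[OF assms(1,3)] in
         \<open>auto intro: continuous_imp_measurable_on_sets_lebesgue integrable_on_const\<close>)
qed

lemma integrable_on_if_continuous_on_compact:
  fixes f :: "'a::euclidean_space \<Rightarrow> 'b::euclidean_space"
  assumes "continuous_on K f" "compact K" "S \<subseteq> K" "S \<in> lmeasurable"
  shows "f integrable_on S"
  using absolutely_integrable_on_if_continuous_on_compact[OF assms]
    set_lebesgue_integral_eq_integral(1) by blast

lemma integrable_on_ball_if_continuous_on_cball:
  fixes f :: "'a::euclidean_space \<Rightarrow> 'b::euclidean_space"
  shows "continuous_on (cball p \<eta>) f \<Longrightarrow> f integrable_on ball p \<eta>"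
  by (rule integrable_on_if_continuous_on_compact) auto

lemma integral_const_lmeasurable:
  assumes "S \<in> lmeasurable"
  shows "integral S (\<lambda>x. c) = c * measure lebesgue S"
proof -
  have "integral S (\<lambda>x. c *\<^sub>R (1::real)) = c *\<^sub>R integral S (\<lambda>x. 1)"
    by (rule integral_cmul)
  then show ?thesis using assms by (simp add: lmeasure_integral)
qed

definition ball_potential :: "real \<Rightarrow> real^3 \<Rightarrow> real \<Rightarrow> real^3 \<Rightarrow> real" where
  "ball_potential \<tau> p \<eta> x = integral (ball p \<eta>) (\<lambda>y. yukawa_kernel \<tau> (x - y))"

definition ball_potential_grad :: "real \<Rightarrow> real^3 \<Rightarrow> real \<Rightarrow> real^3 \<Rightarrow> real^3" where
  "ball_potential_grad \<tau> p \<eta> x = integral (ball p \<eta>) (\<lambda>y. yukawa_kernel_grad \<tau> (x - y))"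

lemma vpot_indicator_ball: "vpot \<tau> (indicator (ball p \<eta>)) x = ball_potential \<tau> p \<eta> x / (4 * pi)"
proof -
  have "(\<lambda>y. exp (- \<tau> * dist x y) / dist x y * indicator (ball p \<eta>) y)
      = (\<lambda>y. if y \<in> ball p \<eta> then yukawa_kernel \<tau> (x - y) else 0)"
    by (auto simp: yukawa_kernel_def dist_norm indicator_def fun_eq_iff)
  then show ?thesis
    unfolding vpot_def ball_potential_def by (simp only: integral_restrict_UNIV) simp
qed

lemma integrable_yukawa_kernel_on_ball:
  "x \<notin> cball p \<eta> \<Longrightarrow> (\<lambda>y. yukawa_kernel \<tau> (x - y)) integrable_on ball p \<eta>"
  by (intro integrable_on_ball_if_continuous_on_cball continuous_on_yukawa_kernel_diff)

lemma integrable_yukawa_kernel_grad_on_ball: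
  "x \<notin> cball p \<eta> \<Longrightarrow> (\<lambda>y. yukawa_kernel_grad \<tau> (x - y)) integrable_on ball p \<eta>"
  by (intro integrable_on_ball_if_continuous_on_cball continuous_on_yukawa_kernel_grad_diff)

lemma ball_potential_nonneg: "x \<notin> cball p \<eta> \<Longrightarrow> ball_potential \<tau> p \<eta> x \<ge> 0"
  unfolding ball_potential_def
  by (rule integral_nonneg[OF integrable_yukawa_kernel_on_ball]) (auto simp: yukawa_kernel_nonneg)

text \<open>Away from the ball the integrands vary uniformly in the base point, because the
  kernel gradient is uniformly continuous on a compact shell around the origin.\<close>
lemma yukawa_kernel_grad_uniformly_close:
  assumes x: "x \<notin> cball p \<eta>" and e: "e > 0"
  obtains \<delta> where "\<delta> > 0"
    "\<And>x'. dist x' x < \<delta> \<Longrightarrow> x' \<notin> cball p \<eta>"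
    "\<And>x' y. dist x' x < \<delta> \<Longrightarrow> y \<in> cball p \<eta> \<Longrightarrow>
       norm (yukawa_kernel_grad \<tau> (x' - y) - yukawa_kernel_grad \<tau> (x - y)) < e"
proof -
  define a where "a = dist p x - \<eta>"
  have a: "a > 0" using x by (auto simp: a_def)
  define Z where "Z = cball (0::real^3) (dist p x + \<eta> + a) - ball 0 (a/2)"
  have "continuous_on Z (yukawa_kernel_grad \<tau>)"
    unfolding yukawa_kernel_grad_def Z_def using a by (intro continuous_intros) auto
  moreover have "compact Z" unfolding Z_def by (intro compact_diff) auto
  ultimately have "uniformly_continuous_on Z (yukawa_kernel_grad \<tau>)"
    using compact_uniformly_continuous by blast
  then obtain d where d: "d > 0"
    "\<forall>z\<in>Z. \<forall>z'\<in>Z. dist z' z < d \<longrightarrow> dist (yukawa_kernel_grad \<tau> z') (yukawa_kernel_grad \<tau> z) < e"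
    unfolding uniformly_continuous_on_def using e by metis
  show ?thesis
  proof (rule that[of "min d (a/2)"])
    show "min d (a/2) > 0" using d a by simp
    fix x' assume x': "dist x' x < min d (a/2)"
    have "dist p x \<le> dist p x' + dist x' x" "dist x' x < a/2" using x' dist_triangle by auto
    then show "x' \<notin> cball p \<eta>" using zero_le_dist[of x' x] unfolding a_def mem_cball by argo
    fix y assume y: "y \<in> cball p \<eta>"
    have "dist p x \<le> dist p y + dist y x" "dist y x \<le> dist y p + dist p x"
      "dist y x \<le> dist y x' + dist x' x" "dist y x' \<le> dist y x + dist x x'"
      by (rule dist_triangle)+
    then have "x - y \<in> Z" "x' - y \<in> Z"
      using y a x' unfolding Z_def a_def by (auto simp: dist_norm norm_minus_commute dist_commute)
    moreover have "dist (x' - y) (x - y) < d" using x' by (simp add: dist_norm)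
    ultimately show "norm (yukawa_kernel_grad \<tau> (x' - y) - yukawa_kernel_grad \<tau> (x - y)) < e"
      using d(2) by (auto simp: dist_norm)
  qed
qed

lemma yukawa_kernel_remainder_bound:
  assumes grad: "\<And>z. z \<in> ball z0 \<delta> \<Longrightarrow> z \<noteq> 0 \<and>
      norm (yukawa_kernel_grad \<tau> z - yukawa_kernel_grad \<tau> z0) \<le> e"
    and w: "w \<in> ball z0 \<delta>"
  shows "norm (yukawa_kernel \<tau> w - yukawa_kernel \<tau> z0 - yukawa_kernel_grad \<tau> z0 \<bullet> (w - z0))
    \<le> e * norm (w - z0)"
proof -
  let ?G = "yukawa_kernel_grad \<tau>" and ?f = "\<lambda>z. yukawa_kernel \<tau> z - yukawa_kernel_grad \<tau> z0 \<bullet> z"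
  have "norm (?f w - ?f z0) \<le> e * norm (w - z0)"
  proof (rule differentiable_bound[where S="ball z0 \<delta>" and f'="\<lambda>z h. (?G z - ?G z0) \<bullet> h"])
    fix z assume z: "z \<in> ball z0 \<delta>"
    then have "(?f has_derivative (\<lambda>h. ?G z \<bullet> h - ?G z0 \<bullet> h)) (at z)"
      using grad by (intro has_derivative_diff has_derivative_yukawa_kernel
          bounded_linear.has_derivative[OF bounded_linear_inner_right] has_derivative_ident) auto
    then show "(?f has_derivative (\<lambda>h. (?G z - ?G z0) \<bullet> h)) (at z within ball z0 \<delta>)"
      by (simp add: inner_diff_left has_derivative_at_withinI)
    show "onorm (\<lambda>h. (?G z - ?G z0) \<bullet> h) \<le> e"
      using grad[OF z] by (intro onorm_le) (metis Cauchy_Schwarz_ineq2 mult_right_mono norm_ge_zero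
          order_trans real_norm_def)
  qed (use w in \<open>auto intro: le_less_trans[OF zero_le_dist]\<close>)
  then show ?thesis by (simp add: inner_diff_right algebra_simps)
qed

lemma ball_potential_remainder_eq_integral:
  fixes \<tau> :: real
  assumes x: "x \<notin> cball p \<eta>" and x': "x' \<notin> cball p \<eta>"
  defines "r \<equiv> \<lambda>y. yukawa_kernel \<tau> (x' - y) - yukawa_kernel \<tau> (x - y)
    - yukawa_kernel_grad \<tau> (x - y) \<bullet> (x' - x)"
  shows "r integrable_on ball p \<eta>"
    and "ball_potential \<tau> p \<eta> x' - ball_potential \<tau> p \<eta> x - ball_potential_grad \<tau> p \<eta> x \<bullet> (x' - x)
      = integral (ball p \<eta>) r"
proof -
  note i1 = integrable_yukawa_kernel_on_ball[OF x', of \<tau>]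
  note i2 = integrable_yukawa_kernel_on_ball[OF x, of \<tau>]
  note i3 = integrable_yukawa_kernel_grad_on_ball[OF x, of \<tau>]
  have i4: "(\<lambda>y. yukawa_kernel_grad \<tau> (x - y) \<bullet> (x' - x)) integrable_on ball p \<eta>"
    using integrable_linear[OF i3 bounded_linear_inner_left[of "x' - x"]] by (simp add: o_def)
  show "r integrable_on ball p \<eta>" unfolding r_def using i1 i2 i4 by (intro integrable_diff)
  have "ball_potential_grad \<tau> p \<eta> x \<bullet> (x' - x)
      = integral (ball p \<eta>) (\<lambda>y. yukawa_kernel_grad \<tau> (x - y) \<bullet> (x' - x))"
    using integral_linear[OF i3 bounded_linear_inner_left[of "x' - x"]]
    by (simp add: o_def ball_potential_grad_def)
  then show "ball_potential \<tau> p \<eta> x' - ball_potential \<tau> p \<eta> x - ball_potential_grad \<tau> p \<eta> x \<bullet> (x' - x)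
      = integral (ball p \<eta>) r"
    unfolding ball_potential_def r_def using i1 i2 i4 by (simp add: integral_diff integrable_diff)
qed

lemma has_derivative_ball_potential:
  assumes x: "x \<notin> cball p \<eta>"
  shows "(ball_potential \<tau> p \<eta> has_derivative (\<lambda>h. ball_potential_grad \<tau> p \<eta> x \<bullet> h)) (at x)"
  unfolding has_derivative_at_alt
proof (intro conjI allI impI)
  show "bounded_linear (\<lambda>h. ball_potential_grad \<tau> p \<eta> x \<bullet> h)"
    by (rule bounded_linear_inner_right)
  fix e :: real assume e: "e > 0"
  define V where "V = measure lebesgue (ball p \<eta>)"
  have V0: "V \<ge> 0" unfolding V_def by simp
  define e' where "e' = e / (V + 1)"
  have e': "e' > 0" "e' * V \<le> e" using e V0 by (auto simp: e'_def field_simps)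
  obtain \<delta> where \<delta>: "\<delta> > 0" "\<And>x'. dist x' x < \<delta> \<Longrightarrow> x' \<notin> cball p \<eta>"
    "\<And>x' y. dist x' x < \<delta> \<Longrightarrow> y \<in> cball p \<eta> \<Longrightarrow>
       norm (yukawa_kernel_grad \<tau> (x' - y) - yukawa_kernel_grad \<tau> (x - y)) < e'"
    using yukawa_kernel_grad_uniformly_close[OF x e'(1)] by metis
  let ?K = "yukawa_kernel \<tau>" and ?G = "yukawa_kernel_grad \<tau>"
  show "\<exists>d>0. \<forall>x'. norm (x' - x) < d \<longrightarrow> norm (ball_potential \<tau> p \<eta> x' - ball_potential \<tau> p \<eta> x
      - ball_potential_grad \<tau> p \<eta> x \<bullet> (x' - x)) \<le> e * norm (x' - x)"
  proof (intro exI[of _ \<delta>] conjI allI impI)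
    show "\<delta> > 0" by fact
    fix x' assume x': "norm (x' - x) < \<delta>"
    have remainder: "norm (?K (x' - y) - ?K (x - y) - ?G (x - y) \<bullet> (x' - x)) \<le> e' * norm (x' - x)"
      if y: "y \<in> ball p \<eta>" for y
    proof -
      have "z \<noteq> 0 \<and> norm (?G z - ?G (x - y)) \<le> e'" if "z \<in> ball (x - y) \<delta>" for z
      proof -
        have z: "dist (z + y) x < \<delta>" using that by (simp add: dist_norm norm_minus_commute algebra_simps)
        then have "z + y \<notin> cball p \<eta>" by (rule \<delta>(2))
        then have "z \<noteq> 0" using y by auto
        moreover have "norm (?G (z + y - y) - ?G (x - y)) < e'" using \<delta>(3)[OF z, of y] y by simp
        ultimately show ?thesis by simp
      qed
      moreover have "x' - y \<in> ball (x - y) \<delta>" using x' by (simp add: dist_norm norm_minus_commute)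
      ultimately show ?thesis using yukawa_kernel_remainder_bound[of "x - y" \<delta> \<tau> e' "x' - y"] by simp
    qed
    have x'c: "x' \<notin> cball p \<eta>" using \<delta>(2) x' by (simp add: dist_norm)
    have "norm (ball_potential \<tau> p \<eta> x' - ball_potential \<tau> p \<eta> x - ball_potential_grad \<tau> p \<eta> x \<bullet> (x' - x))
        \<le> integral (ball p \<eta>) (\<lambda>y. e' * norm (x' - x))"
      unfolding ball_potential_remainder_eq_integral(2)[OF x x'c]
      by (rule integral_norm_bound_integral[OF ball_potential_remainder_eq_integral(1)[OF x x'c]])
         (use remainder in \<open>auto intro: integrable_on_const\<close>)
    also have "\<dots> = (e' * V) * norm (x' - x)"
      by (simp add: integral_const_lmeasurable V_def)
    also have "\<dots> \<le> e * norm (x' - x)" using e' by (intro mult_right_mono) auto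
    finally show "norm (ball_potential \<tau> p \<eta> x' - ball_potential \<tau> p \<eta> x
        - ball_potential_grad \<tau> p \<eta> x \<bullet> (x' - x)) \<le> e * norm (x' - x)" .
  qed
qed

lemma continuous_ball_potential_grad:
  assumes x: "x \<notin> cball p \<eta>"
  shows "isCont (ball_potential_grad \<tau> p \<eta>) x"
  unfolding continuous_at_eps_delta
proof (intro allI impI)
  fix e :: real assume e: "e > 0"
  define V where "V = measure lebesgue (ball p \<eta>)"
  have V0: "V \<ge> 0" unfolding V_def by simp
  define e' where "e' = e / (V + 1)"
  have e': "e' > 0" "e' * V < e" using e V0 by (auto simp: e'_def field_simps)
  obtain \<delta> where \<delta>: "\<delta> > 0" "\<And>x'. dist x' x < \<delta> \<Longrightarrow> x' \<notin> cball p \<eta>"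
    "\<And>x' y. dist x' x < \<delta> \<Longrightarrow> y \<in> cball p \<eta> \<Longrightarrow>
       norm (yukawa_kernel_grad \<tau> (x' - y) - yukawa_kernel_grad \<tau> (x - y)) < e'"
    using yukawa_kernel_grad_uniformly_close[OF x e'(1)] by metis
  show "\<exists>d>0. \<forall>x'. dist x' x < d \<longrightarrow>
      dist (ball_potential_grad \<tau> p \<eta> x') (ball_potential_grad \<tau> p \<eta> x) < e"
  proof (intro exI[of _ \<delta>] conjI allI impI)
    show "\<delta> > 0" by fact
    fix x' assume x': "dist x' x < \<delta>"
    have i1: "(\<lambda>y. yukawa_kernel_grad \<tau> (x' - y)) integrable_on ball p \<eta>"
      by (rule integrable_yukawa_kernel_grad_on_ball[OF \<delta>(2)[OF x']])
    have i2: "(\<lambda>y. yukawa_kernel_grad \<tau> (x - y)) integrable_on ball p \<eta>"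
      by (rule integrable_yukawa_kernel_grad_on_ball[OF x])
    have "dist (ball_potential_grad \<tau> p \<eta> x') (ball_potential_grad \<tau> p \<eta> x)
        = norm (integral (ball p \<eta>) (\<lambda>y. yukawa_kernel_grad \<tau> (x' - y) - yukawa_kernel_grad \<tau> (x - y)))"
      unfolding ball_potential_grad_def dist_norm using i1 i2 by (simp add: integral_diff)
    also have "\<dots> \<le> integral (ball p \<eta>) (\<lambda>y. e')"
      by (rule integral_norm_bound_integral)
         (use i1 i2 \<delta>(3)[OF x'] in \<open>auto intro!: integrable_diff integrable_on_const less_imp_le\<close>)
    also have "\<dots> = e' * V" by (simp add: integral_const_lmeasurable V_def)
    also have "\<dots> < e" by (rule e'(2))
    finally show "dist (ball_potential_grad \<tau> p \<eta> x') (ball_potential_grad \<tau> p \<eta> x) < e" .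
  qed
qed

lemma integral_ball_orthogonal_transformation:
  fixes f :: "real^'n::{finite,wellorder} \<Rightarrow> real^'m"
  assumes T: "orthogonal_transformation T" and f: "f absolutely_integrable_on ball p r"
  shows "integral (ball p r) (\<lambda>y. f (p + T (y - p))) = integral (ball p r) f"
proof -
  let ?g = "\<lambda>y. p + T (y - p)"
  have lin: "bounded_linear T"
    using T orthogonal_transformation_linear linear_conv_bounded_linear by blast
  have "(?g has_derivative (\<lambda>h. 0 + T (h - 0))) (at y within ball p r)" for y
    by (intro has_derivative_add has_derivative_const bounded_linear.has_derivative[OF lin]
        has_derivative_diff has_derivative_ident)
  then have der: "(?g has_derivative T) (at y within ball p r)" for y by simp
  have inj: "inj_on ?g (ball p r)"
  proof (rule inj_onI)
    fix y z assume "?g y = ?g z"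
    then have "y - p = z - p" using orthogonal_transformation_inj[OF T] by (simp add: inj_def)
    then show "y = z" by simp
  qed
  have dist_g: "dist p (?g y) = dist p y" for y
    using T by (simp add: dist_norm orthogonal_transformation_norm norm_minus_commute)
  have "?g ` ball p r = ball p r"
  proof
    show "?g ` ball p r \<subseteq> ball p r" using dist_g by auto
    show "ball p r \<subseteq> ?g ` ball p r"
    proof
      fix y assume y: "y \<in> ball p r"
      obtain z where z: "T z = y - p" using orthogonal_transformation_surj[OF T] by (metis surjD)
      then have "y = ?g (p + z)" by simp
      moreover have "p + z \<in> ball p r" using dist_g[of "p + z"] y z by simp
      ultimately show "y \<in> ?g ` ball p r" by blast
    qed
  qed
  then show ?thesis
    using has_absolute_integral_change_of_variables[of "ball p r" ?g "\<lambda>_. T" f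
        "integral (ball p r) f"] der inj f orthogonal_transformation_det[OF T]
    by simp
qed

lemma orthogonal_transformation_reflection:
  "orthogonal_transformation (\<lambda>h. h - (2 * (h \<bullet> n) / (n \<bullet> n)) *\<^sub>R n)"
  unfolding orthogonal_transformation_def
proof (intro conjI allI linearI)
  fix v w :: 'a
  show "v + w - (2 * ((v + w) \<bullet> n) / (n \<bullet> n)) *\<^sub>R n
      = v - (2 * (v \<bullet> n) / (n \<bullet> n)) *\<^sub>R n + (w - (2 * (w \<bullet> n) / (n \<bullet> n)) *\<^sub>R n)"
    by (simp add: inner_add_left add_divide_distrib distrib_left scaleR_add_left)
  fix c :: real
  show "c *\<^sub>R v - (2 * (c *\<^sub>R v \<bullet> n) / (n \<bullet> n)) *\<^sub>R n
      = c *\<^sub>R (v - (2 * (v \<bullet> n) / (n \<bullet> n)) *\<^sub>R n)"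
    by (simp add: scaleR_right_diff_distrib)
  show "(v - (2 * (v \<bullet> n) / (n \<bullet> n)) *\<^sub>R n) \<bullet> (w - (2 * (w \<bullet> n) / (n \<bullet> n)) *\<^sub>R n) = v \<bullet> w"
  proof (cases "n = 0")
    case False
    then have "n \<bullet> n \<noteq> 0" by simp
    define a where "a = 2 * (v \<bullet> n) / (n \<bullet> n)"
    define b where "b = 2 * (w \<bullet> n) / (n \<bullet> n)"
    have "a * (n \<bullet> w) = b * (v \<bullet> n)" "a * b * (n \<bullet> n) = 2 * b * (v \<bullet> n)"
      using \<open>n \<bullet> n \<noteq> 0\<close> by (simp_all add: a_def b_def inner_commute)
    then show ?thesis
      by (simp add: a_def[symmetric] b_def[symmetric] inner_diff_left inner_diff_right
          inner_commute algebra_simps)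
  qed simp
qed

lemma ball_potential_grad_orthogonal_invariant:
  assumes T: "orthogonal_transformation T" and Tx: "T (x - p) = x - p" and x: "x \<notin> cball p \<eta>"
  shows "T (ball_potential_grad \<tau> p \<eta> x) = ball_potential_grad \<tau> p \<eta> x"
proof -
  let ?G = "\<lambda>y. yukawa_kernel_grad \<tau> (x - y)"
  have lin: "linear T" by (rule orthogonal_transformation_linear[OF T])
  have shift: "T (x - y) = x - (p + T (y - p))" for y
  proof -
    have "T (x - y) = T ((x - p) - (y - p))" by simp
    also have "\<dots> = T (x - p) - T (y - p)" by (rule linear_diff[OF lin])
    finally show ?thesis using Tx by simp
  qed
  have "T (ball_potential_grad \<tau> p \<eta> x) = integral (ball p \<eta>) (\<lambda>y. T (?G y))"
    unfolding ball_potential_grad_def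
    using integral_linear[OF integrable_yukawa_kernel_grad_on_ball[OF x] linear_conv_bounded_linear[THEN iffD1, OF lin]]
    by (simp add: o_def)
  also have "\<dots> = integral (ball p \<eta>) (\<lambda>y. ?G (p + T (y - p)))"
  proof (rule integral_cong)
    fix y
    have "?G (p + T (y - p)) = yukawa_kernel_grad \<tau> (T (x - y))" by (simp only: shift)
    then show "T (?G y) = ?G (p + T (y - p))"
      by (simp only: yukawa_kernel_grad_orthogonal_transformation[OF T])
  qed
  also have "\<dots> = integral (ball p \<eta>) ?G"
  proof (rule integral_ball_orthogonal_transformation[OF T])
    show "?G absolutely_integrable_on ball p \<eta>"
      by (rule absolutely_integrable_on_if_continuous_on_compact[where K="cball p \<eta>"])
         (auto intro: continuous_on_yukawa_kernel_grad_diff[OF x])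
  qed
  finally show ?thesis by (simp add: ball_potential_grad_def)
qed

text \<open>Reflections in hyperplanes through p and x fix both the ball and x, so the gradient has no
  component orthogonal to x - p.\<close>
lemma ball_potential_grad_radial:
  assumes x: "x \<notin> cball p \<eta>"
  shows "ball_potential_grad \<tau> p \<eta> x = (ball_potential_grad \<tau> p \<eta> x \<bullet> sgn (x - p)) *\<^sub>R sgn (x - p)"
proof (cases "x = p")
  case True
  then have "ball p \<eta> = {}" using x by auto
  then show ?thesis unfolding ball_potential_grad_def by (simp only: integral_empty) simp
next
  case xp: False
  let ?G = "ball_potential_grad \<tau> p \<eta> x" and ?\<omega> = "sgn (x - p)"
  have perp: "?G \<bullet> n = 0" if n: "n \<bullet> (x - p) = 0" for n
  proof -
    let ?T = "\<lambda>h. h - (2 * (h \<bullet> n) / (n \<bullet> n)) *\<^sub>R n"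
    have "?T (x - p) = x - p" using n by (simp add: inner_commute)
    then have "?T ?G = ?G"
      by (rule ball_potential_grad_orthogonal_invariant[OF orthogonal_transformation_reflection _ x])
    then have "(2 * (?G \<bullet> n) / (n \<bullet> n)) *\<^sub>R n = 0" by simp
    then show ?thesis by (cases "n = 0") auto
  qed
  define m where "m = ?G - (?G \<bullet> ?\<omega>) *\<^sub>R ?\<omega>"
  have \<omega>\<omega>: "?\<omega> \<bullet> ?\<omega> = 1" using xp by (simp add: norm_sgn flip: power2_norm_eq_inner)
  have m\<omega>: "m \<bullet> ?\<omega> = 0" by (simp add: m_def inner_diff_left \<omega>\<omega>)
  then have "m \<bullet> (x - p) = 0" using xp by (simp add: sgn_div_norm)
  then have "?G \<bullet> m = 0" using perp by (simp add: inner_commute)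
  then have "m \<bullet> m = 0" using m\<omega> by (simp add: m_def inner_diff_left inner_commute)
  then show ?thesis by (simp add: m_def)
qed

lemma yukawa_kernel_grad_diff_radial_bounds:
  assumes x: "x \<notin> cball p \<eta>" and y: "y \<in> cball p \<eta>" and \<tau>: "\<tau> \<ge> 0"
  shows "yukawa_kernel_grad \<tau> (x - y) \<bullet> sgn (x - p) \<le> 0"
    and "- (\<tau> + 1 / (norm (x - p) - \<eta>)) * yukawa_kernel \<tau> (x - y)
           \<le> yukawa_kernel_grad \<tau> (x - y) \<bullet> sgn (x - p)"
proof -
  let ?\<omega> = "sgn (x - p)" and ?G = "yukawa_kernel_grad \<tau> (x - y)" and ?K = "yukawa_kernel \<tau> (x - y)"
  have gap: "norm (x - p) - \<eta> > 0" using x by (auto simp: dist_norm norm_minus_commute)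
  have yp: "norm (y - p) \<le> \<eta>" using y by (simp add: dist_norm norm_minus_commute)
  have far: "norm (x - p) - \<eta> \<le> norm (x - y)"
    using norm_triangle_ineq[of "x - y" "y - p"] yp by simp
  then have pos: "norm (x - y) > 0" using gap by linarith
  have "(y - p) \<bullet> (x - p) \<le> norm (y - p) * norm (x - p)" by (rule norm_cauchy_schwarz)
  also have "\<dots> \<le> \<eta> * norm (x - p)" using yp by (simp add: mult_right_mono)
  finally have "norm (x - p) * (norm (x - p) - \<eta>) \<le> (x - p) \<bullet> (x - p) - (y - p) \<bullet> (x - p)"
    by (simp add: algebra_simps flip: power2_norm_eq_inner) (simp add: power2_eq_square)
  also have "\<dots> = (x - y) \<bullet> (x - p)" by (simp add: inner_diff_left)
  finally have "0 \<le> (x - y) \<bullet> (x - p)" using gap by (smt (verit) mult_nonneg_nonneg norm_ge_zero)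
  then have "0 \<le> (x - y) \<bullet> ?\<omega>" by (simp add: sgn_div_norm)
  moreover have "- (\<tau> * norm (x - y)) - 1 \<le> 0"
    using \<tau> mult_nonneg_nonneg[OF \<tau> norm_ge_zero, of "x - y"] by linarith
  ultimately show "?G \<bullet> ?\<omega> \<le> 0"
    by (simp add: yukawa_kernel_grad_def) (intro divide_nonpos_nonneg mult_nonpos_nonneg; simp)
  have "\<bar>?G \<bullet> ?\<omega>\<bar> \<le> norm ?G * norm ?\<omega>" by (rule Cauchy_Schwarz_ineq2)
  also have "\<dots> \<le> norm ?G" by (simp add: norm_sgn)
  finally have "- norm ?G \<le> ?G \<bullet> ?\<omega>" by linarith
  moreover have "norm ?G = (\<tau> + 1 / norm (x - y)) * ?K"
    using pos \<tau> by (intro norm_yukawa_kernel_grad) auto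
  moreover have "(\<tau> + 1 / norm (x - y)) * ?K \<le> (\<tau> + 1 / (norm (x - p) - \<eta>)) * ?K"
    using gap far pos yukawa_kernel_nonneg
    by (intro mult_right_mono add_left_mono divide_left_mono) auto
  ultimately show "- (\<tau> + 1 / (norm (x - p) - \<eta>)) * ?K \<le> ?G \<bullet> ?\<omega>" by linarith
qed

lemma ball_potential_grad_radial_bounds:
  assumes x: "x \<notin> cball p \<eta>" and \<tau>: "\<tau> \<ge> 0"
  shows "ball_potential_grad \<tau> p \<eta> x \<bullet> sgn (x - p) \<le> 0"
    and "- (\<tau> + 1 / (norm (x - p) - \<eta>)) * ball_potential \<tau> p \<eta> x
           \<le> ball_potential_grad \<tau> p \<eta> x \<bullet> sgn (x - p)"
proof -
  let ?\<omega> = "sgn (x - p)" and ?G = "\<lambda>y. yukawa_kernel_grad \<tau> (x - y)"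
    and ?K = "\<lambda>y. yukawa_kernel \<tau> (x - y)" and ?M = "\<tau> + 1 / (norm (x - p) - \<eta>)"
  have iG: "(\<lambda>y. ?G y \<bullet> ?\<omega>) integrable_on ball p \<eta>"
    using integrable_linear[OF integrable_yukawa_kernel_grad_on_ball[OF x]
        bounded_linear_inner_left] by (simp add: o_def)
  have grad_eq: "ball_potential_grad \<tau> p \<eta> x \<bullet> ?\<omega> = integral (ball p \<eta>) (\<lambda>y. ?G y \<bullet> ?\<omega>)"
    using integral_linear[OF integrable_yukawa_kernel_grad_on_ball[OF x] bounded_linear_inner_left]
    by (simp add: o_def ball_potential_grad_def)
  note pointwise = yukawa_kernel_grad_diff_radial_bounds[OF x _ \<tau>]
  have "integral (ball p \<eta>) (\<lambda>y. ?G y \<bullet> ?\<omega>) \<le> integral (ball p \<eta>) (\<lambda>y. 0)"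
    by (rule integral_le[OF iG integrable_0]) (use pointwise(1) in auto)
  then show "ball_potential_grad \<tau> p \<eta> x \<bullet> ?\<omega> \<le> 0" unfolding grad_eq by simp
  have "- ?M * ball_potential \<tau> p \<eta> x = integral (ball p \<eta>) (\<lambda>y. - ?M * ?K y)"
    by (simp add: ball_potential_def)
  also have "\<dots> \<le> ball_potential_grad \<tau> p \<eta> x \<bullet> ?\<omega>"
    unfolding grad_eq
    using pointwise(2) integrable_on_cmult_left[OF integrable_yukawa_kernel_on_ball[OF x], of "- ?M"]
    by (intro integral_le iG) auto
  finally show "- ?M * ball_potential \<tau> p \<eta> x \<le> ball_potential_grad \<tau> p \<eta> x \<bullet> ?\<omega>" .
qed

lemma ball_potential_lower:
  assumes x: "x \<notin> cball p \<eta>" and s: "0 < s" "s \<le> \<eta>" and \<tau>: "\<tau> \<ge> 0"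
  shows "measure lebesgue (ball (0::real^3) 1) * s^3 *
     (exp (- \<tau> * (norm (x - p) - \<eta> + 2 * s)) / (norm (x - p) - \<eta> + 2 * s)) \<le> ball_potential \<tau> p \<eta> x"
proof -
  define n where "n = norm (x - p)"
  have xp: "n > \<eta>" using x by (auto simp: n_def dist_norm norm_minus_commute)
  define q where "q = p + ((\<eta> - s) / n) *\<^sub>R (x - p)"
  define N where "N = n - \<eta> + 2 * s"
  have "x \<noteq> p" using xp s by (auto simp: n_def)
  then have pq: "dist p q = \<eta> - s" using s by (simp add: q_def n_def dist_norm)
  have sub: "ball q s \<subseteq> ball p \<eta>" "cball q s \<subseteq> cball p \<eta>"
    using pq by (simp_all add: ball_subset_ball_iff cball_subset_cball_iff dist_commute)
  have xq: "norm (x - q) = n - \<eta> + s"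
  proof -
    have "x - q = (1 - (\<eta> - s) / n) *\<^sub>R (x - p)" by (simp add: q_def algebra_simps)
    moreover have "0 \<le> 1 - (\<eta> - s) / n" using xp s by (simp add: field_simps)
    ultimately have "norm (x - q) = (1 - (\<eta> - s) / n) * n" by (simp add: n_def)
    also have "\<dots> = n - \<eta> + s" using xp s by (simp add: field_simps)
    finally show ?thesis .
  qed
  have pointwise: "exp (- \<tau> * N) / N \<le> yukawa_kernel \<tau> (x - y)" if y: "y \<in> ball q s" for y
  proof (rule yukawa_kernel_ge[OF _ _ \<tau>])
    show "0 < norm (x - y)" using x y sub by auto
    have "norm (x - y) \<le> norm (x - q) + norm (q - y)" using norm_triangle_ineq[of "x - q" "q - y"] by simp
    then show "norm (x - y) \<le> N" using xq y by (simp add: N_def dist_norm)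
  qed
  have xq': "x \<notin> cball q s" using x sub by auto
  have i1: "(\<lambda>y. yukawa_kernel \<tau> (x - y)) integrable_on ball q s"
    by (rule integrable_yukawa_kernel_on_ball[OF xq'])
  have "measure lebesgue (ball (0::real^3) 1) * s^3 * (exp (- \<tau> * N) / N)
      = integral (ball q s) (\<lambda>y. exp (- \<tau> * N) / N)"
    using content_ball_conv_unit_ball[of s q] s by (simp add: integral_const_lmeasurable)
  also have "\<dots> \<le> integral (ball q s) (\<lambda>y. yukawa_kernel \<tau> (x - y))"
    by (rule integral_le) (use i1 pointwise in \<open>auto intro: integrable_on_const\<close>)
  also have "\<dots> \<le> ball_potential \<tau> p \<eta> x"
    unfolding ball_potential_def
    by (rule integral_subset_le[OF sub(1) i1 integrable_yukawa_kernel_on_ball[OF x]])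
       (simp add: yukawa_kernel_nonneg)
  finally show ?thesis by (simp add: N_def n_def)
qed

lemma ball_potential_lower_exp:
  assumes x: "x \<notin> cball p \<eta>" and \<tau>: "\<tau> > 0" "1 / \<tau> \<le> \<eta>" and R: "norm (x - p) + \<eta> \<le> R"
  shows "measure lebesgue (ball (0::real^3) 1) * exp (-2) / (R * \<tau>^3) * exp (- \<tau> * (norm (x - p) - \<eta>))
    \<le> ball_potential \<tau> p \<eta> x"
proof -
  define V where "V = measure lebesgue (ball (0::real^3) 1)"
  define N where "N = norm (x - p) - \<eta> + 2 / \<tau>"
  have gap: "norm (x - p) - \<eta> > 0" using x by (auto simp: dist_norm norm_minus_commute)
  have "0 < 2 / \<tau>" "2 / \<tau> \<le> 2 * \<eta>" using \<tau> by auto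
  then have N: "0 < N" "N \<le> R" using gap R unfolding N_def by linarith+
  define E where "E = exp (-2) * exp (- \<tau> * (norm (x - p) - \<eta>))"
  have "exp (- \<tau> * N) = E"
    using \<tau> by (simp add: N_def E_def algebra_simps flip: exp_add)
  have "V / \<tau>^3 * (E / R) \<le> V / \<tau>^3 * (E / N)"
    using N \<tau> by (intro mult_left_mono divide_left_mono) (auto simp: E_def V_def)
  then have "V * exp (-2) / (R * \<tau>^3) * exp (- \<tau> * (norm (x - p) - \<eta>))
      \<le> V * (1 / \<tau>)^3 * (exp (- \<tau> * N) / N)"
    unfolding \<open>exp (- \<tau> * N) = E\<close> by (simp add: E_def power_one_over field_simps)
  also have "\<dots> \<le> ball_potential \<tau> p \<eta> x"
    unfolding V_def N_def using ball_potential_lower[OF x _ \<tau>(2), of \<tau>] \<tau>(1) by simp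
  finally show ?thesis by (simp add: V_def)
qed

lemma ball_potential_grad_radial_lower:
  assumes x: "x \<notin> cball p \<eta>" and \<tau>: "\<tau> \<ge> 0" and d: "0 < d" "d \<le> norm (x - p) - \<eta>"
  shows "- ((\<tau> + 1 / d) * ball_potential \<tau> p \<eta> x) \<le> ball_potential_grad \<tau> p \<eta> x \<bullet> sgn (x - p)"
proof -
  have "(\<tau> + 1 / (norm (x - p) - \<eta>)) * ball_potential \<tau> p \<eta> x \<le> (\<tau> + 1 / d) * ball_potential \<tau> p \<eta> x"
    using d x by (intro mult_right_mono add_left_mono divide_left_mono ball_potential_nonneg) auto
  then show ?thesis using ball_potential_grad_radial_bounds(2)[OF x \<tau>] by linarith
qed

lemma inner_gt_neg_norm_mult_if_notin_segment:
  fixes x p p' :: "'a::euclidean_space"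
  assumes "x \<notin> closed_segment p p'"
  shows "(x - p) \<bullet> (x - p') > - (norm (x - p) * norm (x - p'))"
proof (rule ccontr)
  assume neg: "\<not> ?thesis"
  have "(norm ((x - p') - (x - p)))\<^sup>2 = (norm (x - p))\<^sup>2 + (norm (x - p'))\<^sup>2 - 2 * ((x - p) \<bullet> (x - p'))"
    unfolding power2_norm_eq_inner by (simp add: inner_diff_left inner_diff_right inner_commute)
  then have "(norm (x - p) + norm (x - p'))\<^sup>2 \<le> (norm ((x - p') - (x - p)))\<^sup>2"
    using neg by (simp add: power2_sum)
  then have "norm (x - p) + norm (x - p') \<le> norm ((x - p') - (x - p))"
    by (rule power2_le_imp_le) simp
  then have "dist p x + dist x p' \<le> dist p p'" by (simp add: dist_norm norm_minus_commute)
  then have "dist p p' = dist p x + dist x p'" using dist_triangle[of p p' x] by linarith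
  then show False using assms between between_mem_segment by blast
qed

lemma one_minus_mult_square_le:
  fixes c d \<tau> :: real
  assumes c: "0 < c" "c \<le> 1" and d: "d > 0" and large: "8 / (c * d) \<le> \<tau>"
  shows "(1 - c) * (\<tau> + 1 / d)\<^sup>2 \<le> (1 - c / 2) * \<tau>\<^sup>2"
proof -
  define y where "y = 1 / (\<tau> * d)"
  have \<tau>: "\<tau> > 0" using c d large by (smt (verit) divide_pos_pos mult_pos_pos)
  have "8 / c \<le> \<tau> * d" using large c d by (simp add: field_simps)
  then have y: "0 \<le> y" "y \<le> c / 8" using c d \<tau> by (auto simp: y_def field_simps)
  have "y * y \<le> 1 * y" using y c by (intro mult_right_mono) auto
  then have "(1 + y)\<^sup>2 \<le> 1 + 3 * y" by (simp add: power2_eq_square algebra_simps)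
  then have "(1 - c) * (1 + y)\<^sup>2 \<le> (1 - c) * (1 + 3 * c / 8)"
    using c y by (intro mult_left_mono) auto
  also have "\<dots> \<le> 1 - c / 2" using c by (simp add: algebra_simps power2_eq_square)
  finally have "\<tau>\<^sup>2 * ((1 - c) * (1 + y)\<^sup>2) \<le> \<tau>\<^sup>2 * (1 - c / 2)" by (intro mult_left_mono) auto
  moreover have "(\<tau> + 1 / d)\<^sup>2 = \<tau>\<^sup>2 * (1 + y)\<^sup>2"
    using \<tau> d by (simp add: y_def field_simps flip: power_mult_distrib)
  ultimately show ?thesis by (simp add: mult_ac)
qed

lemma ball_potentials_energy_density_lower:
  assumes x1: "x \<notin> cball p \<eta>" and x2: "x \<notin> cball p' \<eta>'" and \<tau>: "\<tau> > 0"
    and d: "d > 0" "d \<le> norm (x - p) - \<eta>" "d \<le> norm (x - p') - \<eta>'"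
    and c: "0 < c" "c \<le> 1" "c - 1 \<le> sgn (x - p) \<bullet> sgn (x - p')"
    and large: "8 / (c * d) \<le> \<tau>"
  shows "c / 2 * \<tau>\<^sup>2 * (ball_potential \<tau> p \<eta> x * ball_potential \<tau> p' \<eta>' x)
      \<le> ball_potential_grad \<tau> p \<eta> x \<bullet> ball_potential_grad \<tau> p' \<eta>' x
         + \<tau>\<^sup>2 * (ball_potential \<tau> p \<eta> x * ball_potential \<tau> p' \<eta>' x)"
proof -
  define U1 where "U1 = ball_potential \<tau> p \<eta> x"
  define U2 where "U2 = ball_potential \<tau> p' \<eta>' x"
  define a1 where "a1 = ball_potential_grad \<tau> p \<eta> x \<bullet> sgn (x - p)"
  define a2 where "a2 = ball_potential_grad \<tau> p' \<eta>' x \<bullet> sgn (x - p')"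
  define M where "M = \<tau> + 1 / d"
  have U: "U1 \<ge> 0" "U2 \<ge> 0" unfolding U1_def U2_def using x1 x2 by (auto intro: ball_potential_nonneg)
  have a: "a1 \<le> 0" "a2 \<le> 0"
    unfolding a1_def a2_def using x1 x2 \<tau> by (auto intro: ball_potential_grad_radial_bounds(1))
  have "- a1 \<le> M * U1" "- a2 \<le> M * U2"
    unfolding a1_def a2_def U1_def U2_def M_def using x1 x2 \<tau> d
    by (smt (verit) ball_potential_grad_radial_lower)+
  then have "(- a1) * (- a2) \<le> (M * U1) * (M * U2)" using a by (intro mult_mono) auto
  then have "M * M * (U1 * U2) * (c - 1) \<le> a1 * a2 * (c - 1)"
    using c(2) by (intro mult_right_mono_neg) (auto simp: algebra_simps)
  also have "\<dots> \<le> a1 * a2 * (sgn (x - p) \<bullet> sgn (x - p'))"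
    using c(3) a by (intro mult_left_mono) (auto simp: mult_nonpos_nonpos)
  also have "\<dots> = ball_potential_grad \<tau> p \<eta> x \<bullet> ball_potential_grad \<tau> p' \<eta>' x"
  proof -
    have "ball_potential_grad \<tau> p \<eta> x = a1 *\<^sub>R sgn (x - p)"
      "ball_potential_grad \<tau> p' \<eta>' x = a2 *\<^sub>R sgn (x - p')"
      unfolding a1_def a2_def by (rule ball_potential_grad_radial[OF x1] ball_potential_grad_radial[OF x2])+
    then show ?thesis by simp
  qed
  finally have cross: "M * M * (U1 * U2) * (c - 1)
      \<le> ball_potential_grad \<tau> p \<eta> x \<bullet> ball_potential_grad \<tau> p' \<eta>' x" .
  have "(1 - c) * (M * M) * (U1 * U2) \<le> (1 - c / 2) * \<tau>\<^sup>2 * (U1 * U2)"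
    using one_minus_mult_square_le[OF c(1,2) d(1) large] U
    unfolding M_def by (intro mult_right_mono) (auto simp: power2_eq_square)
  then have "c / 2 * \<tau>\<^sup>2 * (U1 * U2) \<le> M * M * (U1 * U2) * (c - 1) + \<tau>\<^sup>2 * (U1 * U2)"
    by (simp add: algebra_simps)
  then show ?thesis using cross unfolding U1_def U2_def by linarith
qed

lemma frechet_derivative_vpot_indicator_ball:
  assumes "x \<notin> cball p \<eta>"
  shows "frechet_derivative (vpot \<tau> (indicator (ball p \<eta>))) (at x)
       = (\<lambda>h. (ball_potential_grad \<tau> p \<eta> x \<bullet> h) / (4 * pi))"
proof -
  have eq: "vpot \<tau> (indicator (ball p \<eta>)) = (\<lambda>x. ball_potential \<tau> p \<eta> x / (4 * pi))"
    by (simp add: fun_eq_iff vpot_indicator_ball)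
  have "((\<lambda>x. ball_potential \<tau> p \<eta> x / (4 * pi)) has_derivative
      (\<lambda>h. - ball_potential \<tau> p \<eta> x * (inverse (4 * pi) * 0 * inverse (4 * pi))
           + (ball_potential_grad \<tau> p \<eta> x \<bullet> h) / (4 * pi))) (at x)"
    by (rule has_derivative_divide[OF has_derivative_ball_potential[OF assms] has_derivative_const]) simp
  then show ?thesis unfolding eq by (simp add: frechet_derivative_at[symmetric])
qed

lemma grad_dot_vpot_indicator_balls:
  assumes "x \<notin> cball p \<eta>" "x \<notin> cball p' \<eta>'"
  shows "grad_dot (vpot \<tau> (indicator (ball p \<eta>))) (vpot \<tau> (indicator (ball p' \<eta>'))) x
       = (ball_potential_grad \<tau> p \<eta> x \<bullet> ball_potential_grad \<tau> p' \<eta>' x) / (16 * pi\<^sup>2)"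
  unfolding grad_dot_def frechet_derivative_vpot_indicator_ball[OF assms(1)]
    frechet_derivative_vpot_indicator_ball[OF assms(2)]
  by (simp add: inner_axis power2_eq_square) (simp add: inner_vec_def sum_divide_distrib)

lemma nonpos_at_closure_of_sublevel:
  fixes \<rho> :: "'a::metric_space \<Rightarrow> real"
  assumes D: "D \<inter> U = {x\<in>U. \<rho> x < 0}" and U: "open U" "x0 \<in> U"
    and x0: "x0 \<in> closure D" and cont: "continuous (at x0) \<rho>"
  shows "\<rho> x0 \<le> 0"
proof (rule ccontr)
  assume "\<not> \<rho> x0 \<le> 0"
  then have "\<rho> x0 > 0" by simp
  then obtain dc where dc: "dc > 0" "\<And>y. dist y x0 < dc \<Longrightarrow> dist (\<rho> y) (\<rho> x0) < \<rho> x0"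
    using cont unfolding continuous_at_eps_delta by blast
  obtain dU where dU: "dU > 0" "ball x0 dU \<subseteq> U" using U open_contains_ball by blast
  obtain y where y: "y \<in> D" "dist y x0 < min dc dU"
    using x0 dc(1) dU(1) closure_approachable by (metis min_less_iff_conj)
  then have "y \<in> U" using dU(2) by (auto simp: dist_commute)
  then have "\<rho> y < 0" using y(1) D by auto
  moreover have "dist (\<rho> y) (\<rho> x0) < \<rho> x0" using dc(2) y(2) by simp
  ultimately show False by (simp add: dist_real_def)
qed

lemma linear_along_ball_le:
  fixes L :: "'a::real_normed_vector \<Rightarrow> real"
  assumes L: "linear L" "\<And>w. norm (L w) \<le> norm w * K" and K: "K \<ge> 0" "K * \<beta> \<le> - L v / 2"
    and t: "0 < t" and w: "norm w < \<beta> * t"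
  shows "L (t *\<^sub>R v + w) \<le> t * L v / 2"
proof -
  have "L (t *\<^sub>R v + w) = t * L v + L w" using L(1) by (simp add: linear_add linear_scale)
  also have "\<dots> \<le> t * L v + K * (\<beta> * t)"
  proof -
    have "L w \<le> norm w * K" using L(2)[of w] by (metis abs_ge_self order_trans real_norm_def)
    also have "\<dots> \<le> (\<beta> * t) * K" using w K(1) by (intro mult_right_mono) auto
    finally show ?thesis by (simp add: mult.commute)
  qed
  also have "\<dots> \<le> t * L v / 2" using mult_right_mono[OF K(2), of t] t by (simp add: algebra_simps)
  finally show ?thesis .
qed

lemma has_derivative_negative_on_balls:
  fixes \<rho> :: "'a::real_normed_vector \<Rightarrow> real"
  assumes der: "(\<rho> has_derivative L) (at x0)" and x0: "\<rho> x0 \<le> 0"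
    and v: "norm v = 1" "L v < 0"
  obtains \<beta> t1 where "0 < \<beta>" "\<beta> \<le> 1" "0 < t1"
    "\<And>t y. 0 < t \<Longrightarrow> t < t1 \<Longrightarrow> y \<in> ball (x0 + t *\<^sub>R v) (\<beta> * t) \<Longrightarrow> \<rho> y < 0"
proof -
  define \<alpha> where "\<alpha> = - L v"
  have \<alpha>: "\<alpha> > 0" using v by (simp add: \<alpha>_def)
  have lin: "bounded_linear L" using der by (rule has_derivative_bounded_linear)
  obtain K where K: "K > 0" "\<And>w. norm (L w) \<le> norm w * K"
    using bounded_linear.pos_bounded[OF lin] by blast
  define \<beta> where "\<beta> = min (1/2) (\<alpha> / (2 * K))"
  have \<beta>: "0 < \<beta>" "\<beta> \<le> 1/2" "K * \<beta> \<le> \<alpha> / 2"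
    using \<alpha> K by (auto simp: \<beta>_def min_def field_simps)
  obtain \<delta> where \<delta>: "\<delta> > 0"
    "\<And>y. norm (y - x0) < \<delta> \<Longrightarrow> norm (\<rho> y - \<rho> x0 - L (y - x0)) \<le> \<alpha> / 8 * norm (y - x0)"
    using der \<alpha> unfolding has_derivative_at_alt by (metis zero_less_divide_iff zero_less_numeral)
  show ?thesis
  proof (rule that[OF \<beta>(1) _ half_gt_zero[OF \<delta>(1)]])
    show "\<beta> \<le> 1" using \<beta> by simp
    fix t y assume t: "0 < t" "t < \<delta> / 2" and y: "y \<in> ball (x0 + t *\<^sub>R v) (\<beta> * t)"
    define w where "w = y - x0 - t *\<^sub>R v"
    have w: "norm w < \<beta> * t" using y by (simp add: w_def dist_norm norm_minus_commute algebra_simps)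
    have "norm (y - x0) \<le> norm (t *\<^sub>R v) + norm w"
      using norm_triangle_ineq[of "t *\<^sub>R v" w] by (simp add: w_def)
    moreover have "\<beta> * t \<le> 1/2 * t" using \<beta>(2) t(1) by (intro mult_right_mono) auto
    moreover have "norm (t *\<^sub>R v) = t" using t v by simp
    ultimately have near: "norm (y - x0) \<le> 3/2 * t" using w by linarith
    have "L (t *\<^sub>R v + w) \<le> t * L v / 2"
      using bounded_linear.linear[OF lin] K \<beta>(3) t w by (intro linear_along_ball_le) (auto simp: \<alpha>_def)
    moreover have "y - x0 = t *\<^sub>R v + w" by (simp add: w_def)
    ultimately have lin_part: "L (y - x0) \<le> - (\<alpha> * t) / 2" by (simp add: \<alpha>_def mult.commute)
    have "norm (y - x0) < \<delta>" using near t by linarith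
    then have "norm (\<rho> y - \<rho> x0 - L (y - x0)) \<le> \<alpha> / 8 * norm (y - x0)" by (rule \<delta>(2))
    then have "\<rho> y - \<rho> x0 - L (y - x0) \<le> \<alpha> / 8 * norm (y - x0)"
      unfolding real_norm_def by (rule abs_le_D1)
    also have "\<dots> \<le> \<alpha> / 8 * (3/2 * t)" using near \<alpha> by (intro mult_left_mono) auto
    finally have "\<rho> y - \<rho> x0 - L (y - x0) \<le> \<alpha> / 8 * (3/2 * t)" .
    moreover have "\<alpha> * t > 0" using \<alpha> t by simp
    ultimately show "\<rho> y < 0" using lin_part x0 by linarith
  qed
qed

lemma norm_diff_le_of_mem_ball_along:
  assumes "x \<in> ball (x0 + t *\<^sub>R v) (\<beta> * t)" "norm v = 1" "\<beta> \<le> 1" "0 < t"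
  shows "norm (x - x0) \<le> 2 * t"
proof -
  have "norm (x - x0) \<le> norm (x - (x0 + t *\<^sub>R v)) + norm (t *\<^sub>R v)"
    using norm_triangle_ineq[of "x - (x0 + t *\<^sub>R v)" "t *\<^sub>R v"] by simp
  also have "\<dots> \<le> \<beta> * t + t" using assms by (auto simp: dist_norm norm_minus_commute)
  also have "\<dots> \<le> 2 * t" using mult_right_mono[of \<beta> 1 t] assms by linarith
  finally show ?thesis .
qed

lemma C2_boundary_inner_balls:
  assumes "C2_boundary D" and x0: "x0 \<in> frontier D"
  obtains v \<beta> t1 where "norm v = 1" "0 < \<beta>" "\<beta> \<le> 1" "0 < t1"
    "\<And>t. 0 < t \<Longrightarrow> t < t1 \<Longrightarrow> ball (x0 + t *\<^sub>R v) (\<beta> * t) \<subseteq> D"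
proof -
  obtain U \<rho> where U: "open U" "x0 \<in> U" "C2_on \<rho> U"
      "\<forall>x\<in>U. frechet_derivative \<rho> (at x) \<noteq> (\<lambda>h. 0)" "D \<inter> U = {x\<in>U. \<rho> x < 0}"
    using assms unfolding C2_boundary_def by blast
  obtain L where der: "(\<rho> has_derivative L) (at x0)"
    using U(2,3) unfolding C2_on_def by blast
  have "frechet_derivative \<rho> (at x0) = L" using frechet_derivative_at[OF der] by simp
  then obtain h where h: "L h \<noteq> 0" using U(2,4) by fastforce
  have lin: "linear L" using der has_derivative_linear by blast
  define v0 where "v0 = (if L h < 0 then h else - h)"
  have Lv0: "L v0 < 0" using h by (auto simp: v0_def linear_neg[OF lin])
  then have "v0 \<noteq> 0" using linear_0[OF lin] by auto
  then have v: "norm (sgn v0) = 1" "L (sgn v0) < 0"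
    using Lv0 by (auto simp: sgn_div_norm linear_scale[OF lin] norm_sgn mult_pos_neg)
  have "\<rho> x0 \<le> 0"
    using U(1,2,5) x0 has_derivative_continuous[OF der]
    by (intro nonpos_at_closure_of_sublevel[of D U]) (auto simp: frontier_def)
  then obtain \<beta> t1 where \<beta>: "0 < \<beta>" "\<beta> \<le> 1" "0 < t1"
      and neg: "\<And>t y. 0 < t \<Longrightarrow> t < t1 \<Longrightarrow> y \<in> ball (x0 + t *\<^sub>R sgn v0) (\<beta> * t) \<Longrightarrow> \<rho> y < 0"
    using has_derivative_negative_on_balls[OF der _ v] by blast
  obtain dU where dU: "dU > 0" "ball x0 dU \<subseteq> U" using U(1,2) open_contains_ball by blast
  show ?thesis
  proof (rule that[OF v(1) \<beta>(1,2)])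
    show "0 < min t1 (dU / 2)" using \<beta>(3) dU(1) by simp
    fix t assume t: "0 < t" "t < min t1 (dU / 2)"
    show "ball (x0 + t *\<^sub>R sgn v0) (\<beta> * t) \<subseteq> D"
    proof
      fix y assume y: "y \<in> ball (x0 + t *\<^sub>R sgn v0) (\<beta> * t)"
      have "norm (y - x0) \<le> 2 * t" using y v \<beta> t by (intro norm_diff_le_of_mem_ball_along) auto
      then have "y \<in> U" using t dU by (auto simp: dist_norm norm_minus_commute)
      then show "y \<in> D" using neg[OF t(1) _ y] t U(5) by auto
    qed
  qed
qed

lemma compact_continuous_pos_lower_bound:
  fixes f :: "'a::topological_space \<Rightarrow> real"
  assumes "compact K" "continuous_on K f" "\<And>x. x \<in> K \<Longrightarrow> f x > 0"
  obtains c where "c > 0" "\<And>x. x \<in> K \<Longrightarrow> c \<le> f x"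
proof (cases "K = {}")
  case True
  then show ?thesis using that[of 1] by simp
next
  case False
  then obtain x1 where "x1 \<in> K" "\<forall>y\<in>K. f x1 \<le> f y"
    using continuous_attains_inf[OF assms(1) _ assms(2)] by blast
  then show ?thesis using that assms(3) by blast
qed

lemma exp_neg_phi_le_of_near:
  assumes "\<tau> > 0" "norm (x - x0) \<le> 2 / \<tau>"
  shows "exp (-4) * exp (- \<tau> * (phi x0 p p' - a - b))
    \<le> exp (- \<tau> * (norm (x - p) + norm (x - p') - a - b))"
proof -
  have "norm (x - p) \<le> norm (x0 - p) + norm (x - x0)" "norm (x - p') \<le> norm (x0 - p') + norm (x - x0)"
    using norm_triangle_ineq[of "x0 - p" "x - x0"] norm_triangle_ineq[of "x0 - p'" "x - x0"] by simp_all
  then have "norm (x - p) + norm (x - p') \<le> phi x0 p p' + 4 / \<tau>"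
    using assms(2) by (simp add: phi_def dist_norm norm_minus_commute)
  then have "- 4 + - \<tau> * (phi x0 p p' - a - b) \<le> - \<tau> * (norm (x - p) + norm (x - p') - a - b)"
    using assms(1) by (simp add: field_simps)
  then show ?thesis by (simp flip: exp_add)
qed

lemma exists_frontier_minimiser_phi:
  fixes D :: "(real^3) set"
  assumes "bounded D" "D \<noteq> {}"
  obtains x0 where "x0 \<in> frontier D" "(INF x\<in>frontier D. phi x p p') = phi x0 p p'"
proof -
  have "frontier D \<noteq> {}"
    using assms frontier_eq_empty[of D] by auto
  moreover have "continuous_on (frontier D) (\<lambda>x. phi x p p')"
    unfolding phi_def by (intro continuous_intros)
  ultimately obtain x0 where x0: "x0 \<in> frontier D" "\<And>y. y \<in> frontier D \<Longrightarrow> phi x0 p p' \<le> phi y p p'"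
    using continuous_attains_inf[OF compact_frontier_bounded[OF assms(1)]] by blast
  moreover have "(INF x\<in>frontier D. phi x p p') = phi x0 p p'"
    using x0 by (intro cInf_eq_minimum) auto
  ultimately show ?thesis using that by blast
qed

locale separated_balls =
  fixes D :: "(real^3) set" and p p' :: "real^3" and \<eta> \<eta>' :: real
  assumes bounded_D: "bounded D" and open_D: "open D"
    and radii_pos: "\<eta> > 0" "\<eta>' > 0"
    and balls_disjoint: "closure (ball p \<eta>) \<inter> closure D = {}" "closure (ball p' \<eta>') \<inter> closure D = {}"
    and segment_disjoint: "closed_segment p p' \<inter> closure D = {}"
begin

definition energy_density :: "real \<Rightarrow> real^3 \<Rightarrow> real" where
  "energy_density \<tau> x = (ball_potential_grad \<tau> p \<eta> x \<bullet> ball_potential_grad \<tau> p' \<eta>' x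
     + \<tau>\<^sup>2 * (ball_potential \<tau> p \<eta> x * ball_potential \<tau> p' \<eta>' x)) / (16 * pi\<^sup>2)"

lemma compact_closure_D: "compact (closure D)"
  using bounded_D by simp

lemma notin_cballs:
  assumes "x \<in> closure D"
  shows "x \<notin> cball p \<eta>" "x \<notin> cball p' \<eta>'"
  using assms balls_disjoint radii_pos by auto

lemma Jfun_eq_integral_energy_density:
  "Jfun D \<tau> (indicator (ball p \<eta>)) (indicator (ball p' \<eta>')) = integral D (energy_density \<tau>)"
  unfolding Jfun_def
proof (rule integral_cong)
  fix x assume "x \<in> D"
  then have x: "x \<in> closure D" using closure_subset by blast
  show "grad_dot (vpot \<tau> (indicator (ball p \<eta>))) (vpot \<tau> (indicator (ball p' \<eta>'))) x
      + \<tau>\<^sup>2 * vpot \<tau> (indicator (ball p \<eta>)) x * vpot \<tau> (indicator (ball p' \<eta>')) x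
      = energy_density \<tau> x"
    unfolding grad_dot_vpot_indicator_balls[OF notin_cballs[OF x]] vpot_indicator_ball energy_density_def
    by (simp add: field_simps power2_eq_square)
qed

lemma continuous_on_energy_density: "continuous_on (closure D) (energy_density \<tau>)"
proof (rule continuous_at_imp_continuous_on, rule ballI)
  fix x assume "x \<in> closure D"
  note out = notin_cballs[OF this]
  show "isCont (energy_density \<tau>) x"
    unfolding energy_density_def
    by (intro continuous_intros continuous_ball_potential_grad out
        has_derivative_continuous[OF has_derivative_ball_potential]) simp
qed

lemma integrable_energy_density:
  "S \<subseteq> closure D \<Longrightarrow> S \<in> lmeasurable \<Longrightarrow> energy_density \<tau> integrable_on S"
  by (rule integrable_on_if_continuous_on_compact[OF continuous_on_energy_density compact_closure_D])

lemma integral_energy_density_le_Jfun: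
  assumes "B \<subseteq> D" "B \<in> lmeasurable" "\<And>x. x \<in> D \<Longrightarrow> 0 \<le> energy_density \<tau> x"
  shows "integral B (energy_density \<tau>) \<le> Jfun D \<tau> (indicator (ball p \<eta>)) (indicator (ball p' \<eta>'))"
  unfolding Jfun_eq_integral_energy_density
  using assms closure_subset[of D] lmeasurable_open[OF bounded_D open_D]
  by (intro integral_subset_le integrable_energy_density) auto

lemma uniform_gap:
  obtains d where "d > 0" "\<And>x. x \<in> closure D \<Longrightarrow> d \<le> norm (x - p) - \<eta>"
    "\<And>x. x \<in> closure D \<Longrightarrow> d \<le> norm (x - p') - \<eta>'"
proof -
  have "continuous_on (closure D) (\<lambda>x. min (norm (x - p) - \<eta>) (norm (x - p') - \<eta>'))"
    by (intro continuous_intros)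
  moreover have "0 < min (norm (x - p) - \<eta>) (norm (x - p') - \<eta>')" if "x \<in> closure D" for x
    using notin_cballs[OF that] by (auto simp: dist_norm norm_minus_commute)
  ultimately obtain d where "d > 0"
    "\<And>x. x \<in> closure D \<Longrightarrow> d \<le> min (norm (x - p) - \<eta>) (norm (x - p') - \<eta>')"
    using compact_continuous_pos_lower_bound[OF compact_closure_D] by blast
  then show ?thesis using that by simp
qed

lemma uniform_angle_gap:
  obtains c where "0 < c" "c \<le> 1" "\<And>x. x \<in> closure D \<Longrightarrow> c - 1 \<le> sgn (x - p) \<bullet> sgn (x - p')"
proof -
  define cosine where "cosine x = ((x - p) \<bullet> (x - p')) / (norm (x - p) * norm (x - p'))" for x
  have apart: "x \<noteq> p" "x \<noteq> p'" if "x \<in> closure D" for x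
    using notin_cballs[OF that] radii_pos by auto
  have "continuous_on (closure D) (\<lambda>x. cosine x + 1)"
    unfolding cosine_def using apart by (intro continuous_intros) auto
  moreover have "0 < cosine x + 1" if x: "x \<in> closure D" for x
  proof -
    have "x \<notin> closed_segment p p'" using x segment_disjoint by auto
    then have "- (norm (x - p) * norm (x - p')) < (x - p) \<bullet> (x - p')"
      by (rule inner_gt_neg_norm_mult_if_notin_segment)
    moreover have "norm (x - p) * norm (x - p') > 0" using apart[OF x] by simp
    ultimately have "-1 < ((x - p) \<bullet> (x - p')) / (norm (x - p) * norm (x - p'))"
      by (simp add: less_divide_eq)
    then show ?thesis by (simp add: cosine_def)
  qed
  ultimately obtain c0 where c0: "c0 > 0" "\<And>x. x \<in> closure D \<Longrightarrow> c0 \<le> cosine x + 1"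
    using compact_continuous_pos_lower_bound[OF compact_closure_D] by blast
  show ?thesis
  proof (rule that[of "min 1 c0"])
    fix x assume "x \<in> closure D"
    moreover have "sgn (x - p) \<bullet> sgn (x - p') = cosine x"
      by (simp add: cosine_def sgn_div_norm divide_inverse ac_simps)
    ultimately show "min 1 c0 - 1 \<le> sgn (x - p) \<bullet> sgn (x - p')" using c0(2) by force
  qed (use c0 in auto)
qed

lemma energy_density_lower:
  obtains \<kappa> \<tau>1 where "\<kappa> > 0" "\<tau>1 > 0" "\<And>\<tau> x. \<tau> \<ge> \<tau>1 \<Longrightarrow> x \<in> closure D \<Longrightarrow>
      \<kappa> * \<tau>\<^sup>2 * (ball_potential \<tau> p \<eta> x * ball_potential \<tau> p' \<eta>' x) \<le> energy_density \<tau> x"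
proof -
  obtain d where d: "d > 0" "\<And>x. x \<in> closure D \<Longrightarrow> d \<le> norm (x - p) - \<eta>"
    "\<And>x. x \<in> closure D \<Longrightarrow> d \<le> norm (x - p') - \<eta>'"
    using uniform_gap by blast
  obtain c where c: "0 < c" "c \<le> 1" "\<And>x. x \<in> closure D \<Longrightarrow> c - 1 \<le> sgn (x - p) \<bullet> sgn (x - p')"
    using uniform_angle_gap by blast
  show ?thesis
  proof (rule that[of "c / 2 / (16 * pi\<^sup>2)" "8 / (c * d)"])
    show "0 < c / 2 / (16 * pi\<^sup>2)" "0 < 8 / (c * d)" using c d by auto
    fix \<tau> x assume \<tau>: "8 / (c * d) \<le> \<tau>" and x: "x \<in> closure D"
    have "\<tau> > 0" using \<tau> c d by (smt (verit) divide_pos_pos mult_pos_pos zero_less_numeral)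
    then have "c / 2 * \<tau>\<^sup>2 * (ball_potential \<tau> p \<eta> x * ball_potential \<tau> p' \<eta>' x)
        \<le> ball_potential_grad \<tau> p \<eta> x \<bullet> ball_potential_grad \<tau> p' \<eta>' x
           + \<tau>\<^sup>2 * (ball_potential \<tau> p \<eta> x * ball_potential \<tau> p' \<eta>' x)"
      by (rule ball_potentials_energy_density_lower[OF notin_cballs[OF x] _ d(1) d(2,3)[OF x] c(1,2) c(3)[OF x] \<tau>])
    then have "c / 2 * \<tau>\<^sup>2 * (ball_potential \<tau> p \<eta> x * ball_potential \<tau> p' \<eta>' x) / (16 * pi\<^sup>2)
        \<le> energy_density \<tau> x"
      unfolding energy_density_def by (rule divide_right_mono) simp
    then show "c / 2 / (16 * pi\<^sup>2) * \<tau>\<^sup>2 * (ball_potential \<tau> p \<eta> x * ball_potential \<tau> p' \<eta>' x)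
        \<le> energy_density \<tau> x" by simp
  qed
qed

lemma ball_potentials_product_lower:
  obtains R where "R > 0" "\<And>\<tau> x. \<tau> > 0 \<Longrightarrow> 1 / \<tau> \<le> \<eta> \<Longrightarrow> 1 / \<tau> \<le> \<eta>' \<Longrightarrow> x \<in> closure D \<Longrightarrow>
      (measure lebesgue (ball (0::real^3) 1))\<^sup>2 * exp (-4) / (R\<^sup>2 * \<tau>^6)
        * exp (- \<tau> * (norm (x - p) + norm (x - p') - \<eta> - \<eta>'))
      \<le> ball_potential \<tau> p \<eta> x * ball_potential \<tau> p' \<eta>' x"
proof -
  let ?f = "\<lambda>x. norm (x - p) + \<eta> + (norm (x - p') + \<eta>')"
  have "bounded (?f ` closure D)"
    by (intro compact_imp_bounded compact_continuous_image compact_closure_D continuous_intros)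
  then obtain R0 where R0: "\<And>x. x \<in> closure D \<Longrightarrow> \<bar>?f x\<bar> \<le> R0" by (auto simp: bounded_iff)
  define R where "R = max 1 R0"
  have R: "norm (x - p) + \<eta> \<le> R" "norm (x - p') + \<eta>' \<le> R" if "x \<in> closure D" for x
    using abs_le_D1[OF R0[OF that]] radii_pos norm_ge_zero[of "x - p"] norm_ge_zero[of "x - p'"]
    unfolding R_def by linarith+
  show ?thesis
  proof (rule that)
    show "R > 0" by (simp add: R_def)
    fix \<tau> x assume \<tau>: "\<tau> > 0" "1 / \<tau> \<le> \<eta>" "1 / \<tau> \<le> \<eta>'" and x: "x \<in> closure D"
    define V where "V = measure lebesgue (ball (0::real^3) 1)"
    have V: "V \<ge> 0" by (simp add: V_def)
    have "V\<^sup>2 * exp (-4) / (R\<^sup>2 * \<tau>^6) * exp (- \<tau> * (norm (x - p) + norm (x - p') - \<eta> - \<eta>'))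
        = (V * exp (-2) / (R * \<tau>^3) * exp (- \<tau> * (norm (x - p) - \<eta>)))
          * (V * exp (-2) / (R * \<tau>^3) * exp (- \<tau> * (norm (x - p') - \<eta>')))"
      by (simp add: power2_eq_square field_simps flip: exp_add)
    also have "\<dots> \<le> ball_potential \<tau> p \<eta> x * ball_potential \<tau> p' \<eta>' x"
      using notin_cballs[OF x] \<tau> R[OF x] V \<open>R > 0\<close> unfolding V_def
      by (intro mult_mono ball_potential_lower_exp ball_potential_nonneg) auto
    finally show "V\<^sup>2 * exp (-4) / (R\<^sup>2 * \<tau>^6) * exp (- \<tau> * (norm (x - p) + norm (x - p') - \<eta> - \<eta>'))
        \<le> ball_potential \<tau> p \<eta> x * ball_potential \<tau> p' \<eta>' x"
      unfolding V_def .
  qed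
qed

lemma energy_density_lower_near:
  obtains A \<tau>1 where "A > 0" "\<tau>1 > 0"
    "\<And>\<tau> x. \<tau> \<ge> \<tau>1 \<Longrightarrow> x \<in> closure D \<Longrightarrow> 0 \<le> energy_density \<tau> x"
    "\<And>\<tau> x x0. \<tau> \<ge> \<tau>1 \<Longrightarrow> x \<in> closure D \<Longrightarrow> norm (x - x0) \<le> 2 / \<tau> \<Longrightarrow>
       A / \<tau>^4 * exp (- \<tau> * (phi x0 p p' - \<eta> - \<eta>')) \<le> energy_density \<tau> x"
proof -
  obtain \<kappa> \<tau>\<kappa> where \<kappa>: "\<kappa> > 0" "\<tau>\<kappa> > 0" and density: "\<And>\<tau> x. \<tau> \<ge> \<tau>\<kappa> \<Longrightarrow> x \<in> closure D \<Longrightarrow>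
      \<kappa> * \<tau>\<^sup>2 * (ball_potential \<tau> p \<eta> x * ball_potential \<tau> p' \<eta>' x) \<le> energy_density \<tau> x"
    using energy_density_lower by blast
  obtain R where R: "R > 0" and product: "\<And>\<tau> x. \<tau> > 0 \<Longrightarrow> 1 / \<tau> \<le> \<eta> \<Longrightarrow> 1 / \<tau> \<le> \<eta>' \<Longrightarrow>
      x \<in> closure D \<Longrightarrow> (measure lebesgue (ball (0::real^3) 1))\<^sup>2 * exp (-4) / (R\<^sup>2 * \<tau>^6)
        * exp (- \<tau> * (norm (x - p) + norm (x - p') - \<eta> - \<eta>'))
      \<le> ball_potential \<tau> p \<eta> x * ball_potential \<tau> p' \<eta>' x"
    using ball_potentials_product_lower by blast
  define V where "V = measure lebesgue (ball (0::real^3) 1)"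
  have V: "V > 0" unfolding V_def using content_ball_pos[of 1 "0::real^3"] by simp
  define \<tau>1 where "\<tau>1 = max \<tau>\<kappa> (max (1 / \<eta>) (1 / \<eta>'))"
  have \<tau>1: "\<tau>1 > 0" using \<kappa> by (simp add: \<tau>1_def less_max_iff_disj)
  show ?thesis
  proof (rule that[of "\<kappa> * V\<^sup>2 * exp (-8) / R\<^sup>2" \<tau>1])
    show "\<kappa> * V\<^sup>2 * exp (-8) / R\<^sup>2 > 0" using \<kappa> V R by simp
    show "\<tau>1 > 0" by (fact \<tau>1)
    fix \<tau> x assume \<tau>: "\<tau> \<ge> \<tau>1" and x: "x \<in> closure D"
    have "0 \<le> \<kappa> * \<tau>\<^sup>2 * (ball_potential \<tau> p \<eta> x * ball_potential \<tau> p' \<eta>' x)"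
      using \<kappa> notin_cballs[OF x] by (simp add: ball_potential_nonneg)
    also have "\<dots> \<le> energy_density \<tau> x" using density \<tau> x by (simp add: \<tau>1_def)
    finally show "0 \<le> energy_density \<tau> x" .
    fix x0 assume near: "norm (x - x0) \<le> 2 / \<tau>"
    have \<tau>0: "\<tau> > 0" using \<tau> \<tau>1 by linarith
    have small: "1 / \<tau> \<le> \<eta>" "1 / \<tau> \<le> \<eta>'"
      using \<tau> radii_pos \<tau>0 by (auto simp: \<tau>1_def field_simps)
    define E where "E = exp (- \<tau> * (phi x0 p p' - \<eta> - \<eta>'))"
    have "exp (-4) * E \<le> exp (- \<tau> * (norm (x - p) + norm (x - p') - \<eta> - \<eta>'))"
      unfolding E_def using \<tau>0 near by (rule exp_neg_phi_le_of_near)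
    then have "V\<^sup>2 * exp (-4) / (R\<^sup>2 * \<tau>^6) * (exp (-4) * E)
        \<le> V\<^sup>2 * exp (-4) / (R\<^sup>2 * \<tau>^6) * exp (- \<tau> * (norm (x - p) + norm (x - p') - \<eta> - \<eta>'))"
      by (rule mult_left_mono) simp
    also have "\<dots> \<le> ball_potential \<tau> p \<eta> x * ball_potential \<tau> p' \<eta>' x"
      unfolding V_def by (rule product[OF \<tau>0 small x])
    finally have "\<kappa> * \<tau>\<^sup>2 * (V\<^sup>2 * exp (-4) / (R\<^sup>2 * \<tau>^6) * (exp (-4) * E))
        \<le> \<kappa> * \<tau>\<^sup>2 * (ball_potential \<tau> p \<eta> x * ball_potential \<tau> p' \<eta>' x)"
      using \<kappa> by (intro mult_left_mono) auto
    also have "\<dots> \<le> energy_density \<tau> x" using density \<tau> x by (simp add: \<tau>1_def)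
    moreover have "\<kappa> * \<tau>\<^sup>2 * (V\<^sup>2 * exp (-4) / (R\<^sup>2 * \<tau>^6) * (exp (-4) * E))
        = \<kappa> * V\<^sup>2 * exp (-8) / R\<^sup>2 / \<tau>^4 * E"
      by (simp add: mult_exp_exp field_simps eval_nat_numeral)
    ultimately show "\<kappa> * V\<^sup>2 * exp (-8) / R\<^sup>2 / \<tau>^4 * E \<le> energy_density \<tau> x" by simp
  qed
qed

lemma Jfun_lower_exp:
  assumes "C2_boundary D" "D \<noteq> {}"
  obtains C \<tau>0 where "C > 0" "\<tau>0 > 0" "\<And>\<tau>. \<tau> \<ge> \<tau>0 \<Longrightarrow>
    C * exp (- \<tau> * ((INF x\<in>frontier D. phi x p p') - \<eta> - \<eta>'))
      \<le> \<tau>^7 * Jfun D \<tau> (indicator (ball p \<eta>)) (indicator (ball p' \<eta>'))"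
proof -
  obtain x0 where x0: "x0 \<in> frontier D" and inf: "(INF x\<in>frontier D. phi x p p') = phi x0 p p'"
    using exists_frontier_minimiser_phi[OF bounded_D assms(2)] by blast
  obtain v \<beta> t1 where v: "norm v = 1" and \<beta>: "0 < \<beta>" "\<beta> \<le> 1" and t1: "0 < t1"
    and inside: "\<And>t. 0 < t \<Longrightarrow> t < t1 \<Longrightarrow> ball (x0 + t *\<^sub>R v) (\<beta> * t) \<subseteq> D"
    using C2_boundary_inner_balls[OF assms(1) x0] by blast
  obtain A \<tau>1 where A: "A > 0" "\<tau>1 > 0"
    and nonneg: "\<And>\<tau> x. \<tau> \<ge> \<tau>1 \<Longrightarrow> x \<in> closure D \<Longrightarrow> 0 \<le> energy_density \<tau> x"
    and near: "\<And>\<tau> x. \<tau> \<ge> \<tau>1 \<Longrightarrow> x \<in> closure D \<Longrightarrow> norm (x - x0) \<le> 2 / \<tau> \<Longrightarrow>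
       A / \<tau>^4 * exp (- \<tau> * (phi x0 p p' - \<eta> - \<eta>')) \<le> energy_density \<tau> x"
    using energy_density_lower_near by metis
  define V where "V = measure lebesgue (ball (0::real^3) 1)"
  have V: "V > 0" unfolding V_def using content_ball_pos[of 1 "0::real^3"] by simp
  show ?thesis
  proof (rule that[of "A * V * \<beta>^3" "max \<tau>1 (2 / t1)"])
    show "A * V * \<beta>^3 > 0" "max \<tau>1 (2 / t1) > 0" using A V \<beta> by auto
    fix \<tau> assume \<tau>: "max \<tau>1 (2 / t1) \<le> \<tau>"
    have \<tau>0: "\<tau> > 0" using \<tau> A by linarith
    define t where "t = 1 / \<tau>"
    have t: "0 < t" "t < t1" using \<tau> \<tau>0 t1 by (auto simp: t_def field_simps)
    define B where "B = ball (x0 + t *\<^sub>R v) (\<beta> * t)"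
    define E where "E = exp (- \<tau> * (phi x0 p p' - \<eta> - \<eta>'))"
    have BD: "B \<subseteq> D" unfolding B_def using inside t by blast
    have "A / \<tau>^4 * E \<le> energy_density \<tau> x" if x: "x \<in> B" for x
      unfolding E_def using BD closure_subset[of D] x \<tau> norm_diff_le_of_mem_ball_along[of x x0 t v \<beta>] v \<beta> t
      by (intro near) (auto simp: B_def t_def)
    then have "integral B (\<lambda>x. A / \<tau>^4 * E) \<le> integral B (energy_density \<tau>)"
      using BD closure_subset[of D]
      by (intro integral_le integrable_energy_density integrable_on_const) (auto simp: B_def)
    also have "\<dots> \<le> Jfun D \<tau> (indicator (ball p \<eta>)) (indicator (ball p' \<eta>'))"
      using BD nonneg \<tau> closure_subset[of D]
      by (intro integral_energy_density_le_Jfun) (auto simp: B_def)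
    finally have "A / \<tau>^4 * E * (V * (\<beta> * t)^3) \<le> Jfun D \<tau> (indicator (ball p \<eta>)) (indicator (ball p' \<eta>'))"
      using content_ball_conv_unit_ball[of "\<beta> * t" "x0 + t *\<^sub>R v"] \<beta> t
      by (simp add: B_def V_def integral_const_lmeasurable mult_ac)
    moreover have "A / \<tau>^4 * E * (V * (\<beta> * t)^3) = A * V * \<beta>^3 * E / \<tau>^7"
      by (simp add: t_def power_divide field_simps eval_nat_numeral)
    ultimately have "A * V * \<beta>^3 * E / \<tau>^7 \<le> Jfun D \<tau> (indicator (ball p \<eta>)) (indicator (ball p' \<eta>'))"
      by simp
    then show "A * V * \<beta>^3 * exp (- \<tau> * ((INF x\<in>frontier D. phi x p p') - \<eta> - \<eta>'))
        \<le> \<tau>^7 * Jfun D \<tau> (indicator (ball p \<eta>)) (indicator (ball p' \<eta>'))"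
      using \<tau>0 unfolding inf E_def by (simp add: pos_divide_le_eq mult.commute)
  qed
qed

end

theorem lemma3p4:
  fixes D :: "(real^3) set" and p p' :: "real^3" and \<eta> \<eta>' :: real
  assumes "open D" and "bounded D" and "D \<noteq> {}" and "C2_boundary D"
    and "\<eta> > 0" and "\<eta>' > 0"
    and "closure (ball p \<eta>) \<inter> closure D = {}"
    and "closure (ball p' \<eta>') \<inter> closure D = {}"
    and "closed_segment p p' \<inter> closure D = {}"
  shows "\<exists>C \<mu> \<tau>0. C > 0 \<and> \<mu> > 0 \<and> \<tau>0 > 0 \<and>
    (\<forall>\<tau>\<ge>\<tau>0. \<tau> powr (2 + \<mu>) * exp (\<tau> * (INF x\<in>frontier D. phi x p p'))
       * exp (- \<tau> * (\<eta> + \<eta>')) * Jfun D \<tau> (indicator (ball p \<eta>)) (indicator (ball p' \<eta>')) \<ge> C)"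
proof -
  interpret separated_balls D p p' \<eta> \<eta>'
    using assms by unfold_locales
  obtain C \<tau>0 where C: "C > 0" "\<tau>0 > 0" and lower: "\<And>\<tau>. \<tau> \<ge> \<tau>0 \<Longrightarrow>
      C * exp (- \<tau> * ((INF x\<in>frontier D. phi x p p') - \<eta> - \<eta>'))
        \<le> \<tau>^7 * Jfun D \<tau> (indicator (ball p \<eta>)) (indicator (ball p' \<eta>'))"
    using Jfun_lower_exp[OF assms(4,3)] by blast
  have "\<forall>\<tau>\<ge>\<tau>0. \<tau> powr (2 + 5) * exp (\<tau> * (INF x\<in>frontier D. phi x p p'))
      * exp (- \<tau> * (\<eta> + \<eta>')) * Jfun D \<tau> (indicator (ball p \<eta>)) (indicator (ball p' \<eta>')) \<ge> C"
  proof (intro allI impI)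
    fix \<tau> assume \<tau>: "\<tau> \<ge> \<tau>0"
    define m where "m = (INF x\<in>frontier D. phi x p p')"
    have "C = exp (\<tau> * m) * exp (- \<tau> * (\<eta> + \<eta>')) * (C * exp (- \<tau> * (m - \<eta> - \<eta>')))"
      by (simp add: algebra_simps flip: exp_add)
    also have "\<dots> \<le> exp (\<tau> * m) * exp (- \<tau> * (\<eta> + \<eta>'))
        * (\<tau>^7 * Jfun D \<tau> (indicator (ball p \<eta>)) (indicator (ball p' \<eta>')))"
      using lower[OF \<tau>] by (simp add: m_def)
    also have "\<dots> = \<tau> powr (2 + 5) * exp (\<tau> * m) * exp (- \<tau> * (\<eta> + \<eta>'))
        * Jfun D \<tau> (indicator (ball p \<eta>)) (indicator (ball p' \<eta>'))"
      using \<tau> C by (simp add: powr_realpow)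
    finally show "C \<le> \<tau> powr (2 + 5) * exp (\<tau> * (INF x\<in>frontier D. phi x p p'))
        * exp (- \<tau> * (\<eta> + \<eta>')) * Jfun D \<tau> (indicator (ball p \<eta>)) (indicator (ball p' \<eta>'))"
      by (simp add: m_def)
  qed
  then show ?thesis using C by (intro exI[of _ C] exI[of _ "5 :: real"] exI[of _ \<tau>0]) auto
qed

end
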